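(* Let $S\subset\mathbb{P}^3$ be a smooth cubic surface defined by a cubic form with real coefficients, and let $U_1,U_2$ be self-adjoint determinantal representations of $S$. Then $U_1$ and $U_2$ are equivalent if and only if $U_1$ is hermitean equivalent to either $U_2$ or $-U_2$.
   Context: Work over $\mathbb{C}$. A determinantal representation of $S$ (defined by $F$) is a $3\times3$ matrix of linear forms $U=z_0U_0+\dots+z_3U_3$, $U_i\in\operatorname{Mat}_3(\mathbb{C})$, with $\det U=cF$, $c\neq 0$; it is self-adjoint if each $U_i$ is Hermitian. Two determinantal representations $M,M'$ are equivalent if $M'=XMY$ for some $X,Y\in\operatorname{GL}_3(\mathbb{C})$. Two self-adjoint representations $U,U'$ are hermitean equivalent if $U'=XUX^{\ast}$ for some $X\in\operatorname{GL}_3(\mathbb{C})$. *)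

theory Defs
  imports "HOL-Analysis.Analysis"
begin

definition cubic_form :: "(4 \<Rightarrow> 4 \<Rightarrow> 4 \<Rightarrow> real) \<Rightarrow> complex^4 \<Rightarrow> complex" where
  "cubic_form a z = (\<Sum>i\<in>UNIV. \<Sum>j\<in>UNIV. \<Sum>k\<in>UNIV.
      complex_of_real (a i j k) * z$i * z$j * z$k)"

definition smooth_cubic_surface :: "(complex^4 \<Rightarrow> complex) \<Rightarrow> bool" where
  "smooth_cubic_surface F \<longleftrightarrow>
     (\<forall>z. z \<noteq> 0 \<and> F z = 0 \<longrightarrow> \<not> (F has_derivative (\<lambda>h. 0)) (at z))"

definition lin_matrix :: "(4 \<Rightarrow> complex^3^3) \<Rightarrow> complex^4 \<Rightarrow> complex^3^3" where
  "lin_matrix U z = (\<chi> r s. \<Sum>i\<in>UNIV. z$i * U i $ r $ s)"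

definition det_rep :: "(complex^4 \<Rightarrow> complex) \<Rightarrow> (4 \<Rightarrow> complex^3^3) \<Rightarrow> bool" where
  "det_rep F U \<longleftrightarrow> (\<exists>c. c \<noteq> 0 \<and> (\<forall>z. det (lin_matrix U z) = c * F z))"

definition adjoint3 :: "complex^3^3 \<Rightarrow> complex^3^3" where
  "adjoint3 X = (\<chi> r s. cnj (X $ s $ r))"

definition hermitian3 :: "complex^3^3 \<Rightarrow> bool" where
  "hermitian3 A \<longleftrightarrow> adjoint3 A = A"

definition self_adjoint_det_rep :: "(complex^4 \<Rightarrow> complex) \<Rightarrow> (4 \<Rightarrow> complex^3^3) \<Rightarrow> bool" where
  "self_adjoint_det_rep F U \<longleftrightarrow> det_rep F U \<and> (\<forall>i. hermitian3 (U i))"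

definition rep_equiv :: "(4 \<Rightarrow> complex^3^3) \<Rightarrow> (4 \<Rightarrow> complex^3^3) \<Rightarrow> bool" where
  "rep_equiv M M' \<longleftrightarrow> (\<exists>X Y. invertible X \<and> invertible Y \<and> (\<forall>i. M' i = X ** M i ** Y))"

definition herm_equiv :: "(4 \<Rightarrow> complex^3^3) \<Rightarrow> (4 \<Rightarrow> complex^3^3) \<Rightarrow> bool" where
  "herm_equiv U U' \<longleftrightarrow> (\<exists>X. invertible X \<and> (\<forall>i. U' i = X ** U i ** adjoint3 X))"

end

theory Submission
  imports Defs "HOL-Computational_Algebra.Fundamental_Theorem_Algebra"
begin

(*
  If W = X V Y with V, W hermitian, then also W = W* = Y* V X*, so Y*^-1 X intertwines the
  pencil V with itself.  Such an intertwiner is a scalar, by a Schur-type argument: after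
  normalising by an invertible member V(z0) it commutes with the whole pencil, and if a matrix B
  commuting with the pencil were not scalar, then for an eigenvalue x the kernel or the range of
  B - x I would be a line invariant under every V_i.  In a basis starting with that line the pencil
  is block triangular, so its determinant has a linear factor, and a cubic surface containing a
  plane is singular where the plane meets the residual quadric.  Hence X = x Y* with x real, and
  W = x Y* V Y is hermitian equivalent to V or to -V according to the sign of x.
*)

lemma mat_mult_left: "mat c ** A = (\<chi> i j. (c::'a::semiring_1) * A $ i $ j)"
  unfolding matrix_matrix_mult_def mat_def
  by (auto simp: if_distrib if_distribR sum.delta'[OF finite] cong: if_cong)

lemma mat_mult_right: "A ** mat c = (\<chi> i j. A $ i $ j * (c::'a::semiring_1))"
  unfolding matrix_matrix_mult_def mat_def
  by (auto simp: if_distrib if_distribR sum.delta[OF finite] cong: if_cong)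

lemma mat_mult_commute: "mat c ** A = A ** (mat c :: 'a::comm_semiring_1^'n^'n)"
  by (simp add: mat_mult_left mat_mult_right mult.commute)

lemma mat_of_real_mult: "mat (complex_of_real r) ** A = r *\<^sub>R A"
  by (simp add: mat_mult_left vec_eq_iff) (simp add: scaleR_conv_of_real)

lemma mat_inject: "(mat a :: 'a::zero^'n^'n) = mat b \<longleftrightarrow> a = b"
  unfolding mat_def vec_eq_iff by auto

lemma matrix_mul_diff_rdistrib: "(A - B) ** C = A ** C - B ** (C :: 'a::ring_1^'n^'m)"
  by (simp add: vec_eq_iff matrix_matrix_mult_def sum_subtractf left_diff_distrib)

lemma matrix_mul_diff_ldistrib: "C ** (A - B) = C ** A - C ** (B :: 'a::ring_1^'n^'m)"
  by (simp add: vec_eq_iff matrix_matrix_mult_def sum_subtractf right_diff_distrib)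

lemma matrix_mul_uminus_left: "(- A) ** B = - (A ** B :: 'a::ring_1^'n^'m)"
  by (simp add: vec_eq_iff matrix_matrix_mult_def sum_negf)

lemma matrix_mul_uminus_right: "A ** (- B) = - (A ** B :: 'a::ring_1^'n^'m)"
  by (simp add: vec_eq_iff matrix_matrix_mult_def sum_negf)

lemma matrix_mul_scaleR_left: "(k *\<^sub>R A) ** B = k *\<^sub>R (A ** B :: 'a::real_algebra_1^'n^'m)"
  by (simp add: scalar_matrix_assoc)

lemma matrix_mul_scaleR_right: "A ** (k *\<^sub>R B) = k *\<^sub>R (A ** B :: 'a::real_algebra_1^'n^'m)"
  by (simp add: matrix_scalar_ac scalar_matrix_assoc)

lemma matrix_vector_mult_axis: "(M *v axis j 1) $ r = M $ r $ (j :: 'n::finite)"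
proof -
  have "M $ r $ l * axis j 1 $ l = (if j = l then M $ r $ l else 0)" for l
    by (simp add: axis_def)
  then show ?thesis by (simp add: matrix_vector_mult_def)
qed

lemma matrix_vector_mult_smult: "A *v (c *s x) = c *s (A *v x :: 'a::comm_semiring_1^'m)"
  by (simp add: vec_eq_iff matrix_vector_mult_def sum_distrib_left mult.left_commute)

lemma
  assumes "invertible A"
  shows matrix_inv_right: "A ** matrix_inv A = mat 1"
    and matrix_inv_left: "matrix_inv A ** A = mat 1"
  using someI_ex[OF assms[unfolded invertible_def]] by (simp_all add: matrix_inv_def)

lemma invertible_matrix_inv: "invertible A \<Longrightarrow> invertible (matrix_inv A)"
  using matrix_inv_left matrix_inv_right invertible_def by blast

lemma invertible_uminus: "invertible A \<Longrightarrow> invertible (- A :: 'a::ring_1^'n^'m)"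
  unfolding invertible_def by (metis matrix_mul_uminus_left matrix_mul_uminus_right minus_minus)

lemma invertible_mat_1: "invertible (mat 1 :: 'a::semiring_1^'n^'n)"
  unfolding invertible_def by auto

lemma not_invertible_0: "\<not> invertible (0 :: 'a::semiring_1^'n^'n)"
  unfolding invertible_def by (metis mat_0 mat_inject times0_left zero_neq_one)

lemma adjoint3_mult: "adjoint3 (A ** B) = adjoint3 B ** adjoint3 A"
  by (simp add: vec_eq_iff adjoint3_def matrix_matrix_mult_def mult.commute)

lemma adjoint3_adjoint3 [simp]: "adjoint3 (adjoint3 A) = A"
  by (simp add: vec_eq_iff adjoint3_def)

lemma adjoint3_mat [simp]: "adjoint3 (mat c) = mat (cnj c)"
  by (simp add: vec_eq_iff adjoint3_def mat_def)

lemma adjoint3_scaleR [simp]: "adjoint3 (r *\<^sub>R A) = r *\<^sub>R adjoint3 A"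
  by (simp add: vec_eq_iff adjoint3_def)

lemma invertible_adjoint3: "invertible A \<Longrightarrow> invertible (adjoint3 A)"
  unfolding invertible_def by (metis adjoint3_mult adjoint3_mat complex_cnj_one)

definition lin_form :: "(4 \<Rightarrow> complex) \<Rightarrow> complex^4 \<Rightarrow> complex" where
  "lin_form b z = (\<Sum>i\<in>UNIV. z$i * b i)"

lemma lin_matrix_nth: "lin_matrix U z $ r $ s = lin_form (\<lambda>i. U i $ r $ s) z"
  by (simp add: lin_matrix_def lin_form_def)

lemma lin_form_scale_add: "lin_form b (t *s u + v) = t * lin_form b u + lin_form b v"
  by (simp add: lin_form_def sum.distrib sum_distrib_left algebra_simps)

lemma lin_form_diff: "lin_form b (x - y) = lin_form b x - lin_form b y"
  by (simp add: lin_form_def sum_subtractf left_diff_distrib)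

lemma lin_form_scale: "lin_form b (t *s x) = t * lin_form b x"
  by (simp add: lin_form_def sum_distrib_left mult.assoc)

lemma lin_form_cmult: "lin_form (\<lambda>i. c * b i) z = c * lin_form b z"
  by (simp add: lin_form_def sum_distrib_left mult.left_commute)

lemma lin_form_axis: "lin_form b (axis p 1) = b p"
proof -
  have "axis p 1 $ i * b i = (if p = i then b i else 0)" for i
    by (simp add: axis_def)
  then show ?thesis by (simp add: lin_form_def)
qed

lemma has_derivative_lin_form: "(lin_form b has_derivative lin_form b) (at z)"
  unfolding lin_form_def [abs_def]
  by (intro has_derivative_sum has_derivative_mult_left bounded_linear_imp_has_derivative
      bounded_linear_vec_nth)

lemma lin_matrix_mult_left: "P ** lin_matrix U z = lin_matrix (\<lambda>i. P ** U i) z"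
  unfolding vec_eq_iff lin_matrix_def matrix_matrix_mult_def
  by (simp add: sum_distrib_left mult.left_commute, intro allI sum.swap)

lemma lin_matrix_mult_right: "lin_matrix U z ** Q = lin_matrix (\<lambda>i. U i ** Q) z"
  unfolding vec_eq_iff lin_matrix_def matrix_matrix_mult_def
  by (simp add: sum_distrib_left sum_distrib_right mult.assoc, intro allI sum.swap)

lemma lin_form_kernel_contains_line:
  "\<exists>u v. u \<noteq> 0 \<and> lin_form b u = 0 \<and> lin_form b v = 0 \<and> (\<forall>t. t *s u + v \<noteq> 0)"
proof (cases "b = (\<lambda>_. 0)")
  case True
  define u v :: "complex^4" where "u = axis 1 1" and "v = axis 2 1"
  have "u \<noteq> 0" and "(t *s u + v) $ 2 \<noteq> 0" for t
    by (simp add: u_def) (simp add: u_def v_def axis_def)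
  moreover have "lin_form b u = 0" "lin_form b v = 0"
    using True by (simp_all add: lin_form_def)
  ultimately show ?thesis by (metis zero_index)
next
  case False
  then obtain j where bj: "b j \<noteq> 0" by auto
  \<comment> \<open>index arithmetic in the type \<open>4\<close> is modulo 4, so \<open>j\<close>, \<open>j + 1\<close>, \<open>j + 2\<close> are distinct\<close>
  define u :: "complex^4" where "u = b j *s axis (j + 1) 1 - b (j + 1) *s axis j 1"
  define v :: "complex^4" where "v = b j *s axis (j + 2) 1 - b (j + 2) *s axis j 1"
  have "u $ (j + 1) \<noteq> 0" and "(t *s u + v) $ (j + 2) \<noteq> 0" for t
    using bj by (simp_all add: u_def v_def axis_def)
  moreover have "lin_form b u = 0" "lin_form b v = 0"
    by (simp_all add: u_def v_def lin_form_diff lin_form_scale lin_form_axis)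
  ultimately show ?thesis by (metis zero_index)
qed

lemma quadratic_has_root:
  fixes a b c :: complex
  assumes "a \<noteq> 0"
  shows "\<exists>t. a * t^2 + b * t + c = 0"
proof -
  define w where "w = csqrt (b^2 - 4 * a * c)"
  have "a * ((w - b) / (2 * a))^2 + b * ((w - b) / (2 * a)) + c = (w^2 - (b^2 - 4 * a * c)) / (4 * a)"
    using assms by (simp add: field_simps power2_eq_square)
  also have "\<dots> = 0" by (simp add: w_def)
  finally show ?thesis by blast
qed

lemma plane_meets_quadric:
  "\<exists>z. z \<noteq> 0 \<and> lin_form a z = 0 \<and> lin_form b z * lin_form c z - lin_form d z * lin_form e z = 0"
proof -
  define q where "q z = lin_form b z * lin_form c z - lin_form d z * lin_form e z" for z
  obtain u v where uv: "u \<noteq> 0" "lin_form a u = 0" "lin_form a v = 0" "\<forall>t. t *s u + v \<noteq> 0"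
    using lin_form_kernel_contains_line by blast
  have "\<exists>z. z \<noteq> 0 \<and> lin_form a z = 0 \<and> q z = 0"
  proof (cases "q u = 0")
    case True
    then show ?thesis using uv by blast
  next
    case False
    define m where "m = lin_form b u * lin_form c v + lin_form b v * lin_form c u
      - lin_form d u * lin_form e v - lin_form d v * lin_form e u"
    have q_line: "q (t *s u + v) = q u * t^2 + m * t + q v" for t
      unfolding q_def m_def lin_form_scale_add by (simp add: algebra_simps power2_eq_square)
    obtain t where "q u * t^2 + m * t + q v = 0"
      using quadratic_has_root[OF False] by blast
    then have "q (t *s u + v) = 0" by (simp add: q_line)
    moreover have "lin_form a (t *s u + v) = 0"
      using uv by (simp add: lin_form_scale_add)
    ultimately show ?thesis using uv(4) by blast
  qed
  then show ?thesis by (simp add: q_def)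
qed

lemma plane_times_quadric_not_smooth:
  assumes "\<And>z. F z = lin_form a z * (lin_form b z * lin_form c z - lin_form d z * lin_form e z)"
  shows "\<not> smooth_cubic_surface F"
proof -
  obtain z where z: "z \<noteq> 0" "lin_form a z = 0"
    and q: "lin_form b z * lin_form c z - lin_form d z * lin_form e z = 0"
    using plane_meets_quadric by blast
  have F: "F = (\<lambda>z. lin_form a z * (lin_form b z * lin_form c z - lin_form d z * lin_form e z))"
    using assms by blast
  have "(F has_derivative (\<lambda>h. lin_form a z * (lin_form b z * lin_form c h + lin_form b h * lin_form c z
          - (lin_form d z * lin_form e h + lin_form d h * lin_form e z))
        + lin_form a h * (lin_form b z * lin_form c z - lin_form d z * lin_form e z))) (at z)"
    unfolding F by (intro has_derivative_mult has_derivative_diff has_derivative_lin_form)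
  then have "(F has_derivative (\<lambda>h. 0)) (at z)"
    using z(2) q by simp
  moreover have "F z = 0" using assms z(2) by simp
  ultimately show ?thesis using z(1) unfolding smooth_cubic_surface_def by blast
qed

lemma block_triangular_not_smooth:
  assumes "det_rep F N" and "\<And>i. N i $ 2 $ 1 = 0" and "\<And>i. N i $ 3 $ 1 = 0"
  shows "\<not> smooth_cubic_surface F"
proof -
  obtain c where "c \<noteq> 0" and c: "\<And>z. det (lin_matrix N z) = c * F z"
    using assms(1) unfolding det_rep_def by blast
  define l where "l r s = lin_form (\<lambda>i. N i $ r $ s)" for r s
  have "F z = lin_form (\<lambda>i. inverse c * N i $ 1 $ 1) z * (l 2 2 z * l 3 3 z - l 2 3 z * l 3 2 z)" for z
  proof -
    have "F z = inverse c * det (lin_matrix N z)"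
      using \<open>c \<noteq> 0\<close> by (simp add: c)
    also have "det (lin_matrix N z) = l 1 1 z * (l 2 2 z * l 3 3 z - l 2 3 z * l 3 2 z)"
      unfolding det_3 using assms(2,3)
      by (simp add: lin_matrix_nth l_def lin_form_def algebra_simps)
    finally show ?thesis by (simp add: l_def lin_form_cmult)
  qed
  then show ?thesis
    unfolding l_def by (rule plane_times_quadric_not_smooth)
qed

lemma invertible_with_first_column:
  fixes k :: "'a::field^3"
  assumes "k \<noteq> 0"
  shows "\<exists>Q::'a^3^3. invertible Q \<and> Q *v axis 1 1 = k"
proof -
  have col: "Q *v axis 1 1 = k" if "\<And>r. Q $ r $ 1 = k $ r" for Q :: "'a^3^3"
    using that by (simp add: vec_eq_iff matrix_vector_mult_axis)
  consider "k$1 \<noteq> 0" | "k$1 = 0" "k$2 \<noteq> 0" | "k$1 = 0" "k$2 = 0" "k$3 \<noteq> 0"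
    using assms by (metis vec_eq_iff zero_index exhaust_3)
  then show ?thesis
  proof cases
    case 1
    define Q :: "'a^3^3" where "Q = (\<chi> r s. if s = 1 then k$r else if r = s then 1 else 0)"
    have "det Q = k$1" unfolding det_3 Q_def by simp
    then show ?thesis using 1 col by (intro exI[of _ Q]) (simp add: invertible_det_nz Q_def)
  next
    case 2
    define Q :: "'a^3^3" where
      "Q = (\<chi> r s. if s = 1 then k$r else if s = 2 then (if r = 1 then 1 else 0) else (if r = 3 then 1 else 0))"
    have "det Q = - k$2" unfolding det_3 Q_def using 2 by simp
    then show ?thesis using 2 col by (intro exI[of _ Q]) (simp add: invertible_det_nz Q_def)
  next
    case 3
    define Q :: "'a^3^3" where
      "Q = (\<chi> r s. if s = 1 then k$r else if s = 2 then (if r = 1 then 1 else 0) else (if r = 2 then 1 else 0))"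
    have "det Q = k$3" unfolding det_3 Q_def using 3 by simp
    then show ?thesis using 3 col by (intro exI[of _ Q]) (simp add: invertible_det_nz Q_def)
  qed
qed

lemma det_rep_mult:
  assumes "det_rep F N" and "invertible P" and "invertible Q"
  shows "det_rep F (\<lambda>i. P ** N i ** Q)"
proof -
  obtain c where "c \<noteq> 0" and c: "\<And>z. det (lin_matrix N z) = c * F z"
    using assms(1) unfolding det_rep_def by blast
  have "det (lin_matrix (\<lambda>i. P ** N i ** Q) z) = (det P * det Q * c) * F z" for z
    unfolding lin_matrix_mult_left[symmetric] lin_matrix_mult_right[symmetric] det_mul c
    by simp
  moreover have "det P * det Q * c \<noteq> 0"
    using assms(2,3) \<open>c \<noteq> 0\<close> by (simp add: invertible_det_nz)
  ultimately show ?thesis unfolding det_rep_def by blast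
qed

lemma common_eigenvector_not_smooth:
  assumes "det_rep F N" and "k \<noteq> 0" and "\<And>i. N i *v k = \<nu> i *s k"
  shows "\<not> smooth_cubic_surface F"
proof -
  obtain Q :: "complex^3^3" where Q: "invertible Q" "Q *v axis 1 1 = k"
    using invertible_with_first_column[OF assms(2)] by blast
  define N' where "N' = (\<lambda>i. matrix_inv Q ** N i ** Q)"
  have Q_inv_k: "matrix_inv Q *v k = axis 1 1"
    by (simp add: Q(2)[symmetric] matrix_vector_mul_assoc matrix_inv_left[OF Q(1)])
  have "N' i *v axis 1 1 = \<nu> i *s axis 1 1" for i
    by (simp add: N'_def Q(2) assms(3) Q_inv_k matrix_vector_mult_smult
        flip: matrix_vector_mul_assoc)
  then have "N' i $ r $ 1 = \<nu> i * axis 1 1 $ r" for i r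
    by (metis matrix_vector_mult_axis vector_smult_component)
  then show ?thesis
    by (intro block_triangular_not_smooth[of F N'])
       (simp_all add: N'_def det_rep_mult assms(1) Q(1) invertible_matrix_inv axis_def)
qed

definition proportional :: "'a::times^'n \<Rightarrow> 'a^'n \<Rightarrow> bool" where
  "proportional x y \<longleftrightarrow> (\<forall>r s. x $ r * y $ s = x $ s * y $ r)"

lemma proportional_imp_eq_smult:
  fixes x y :: "'a::field^'n"
  assumes "proportional x y" and "y $ s \<noteq> 0"
  shows "x = (x $ s / y $ s) *s y"
  using assms by (simp add: proportional_def vec_eq_iff field_simps)

lemma proportional_3_iff:
  fixes x y :: "'a::comm_ring^3"
  shows "proportional x y \<longleftrightarrow>
    x$1 * y$2 = x$2 * y$1 \<and> x$1 * y$3 = x$3 * y$1 \<and> x$2 * y$3 = x$3 * y$2"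
  unfolding proportional_def forall_3 by (auto simp: mult.commute)

definition cross_product :: "'a::comm_ring^3 \<Rightarrow> 'a^3 \<Rightarrow> 'a^3" where
  "cross_product a b = vector [a$2 * b$3 - a$3 * b$2, a$3 * b$1 - a$1 * b$3, a$1 * b$2 - a$2 * b$1]"

lemma cross_product_eq_0_iff: "cross_product a b = 0 \<longleftrightarrow> proportional a b"
  by (auto simp: cross_product_def proportional_3_iff vec_eq_iff forall_3 mult.commute)

lemma proportional_cross_product:
  fixes a b y :: "'a::comm_ring^3"
  assumes "a$1 * y$1 + a$2 * y$2 + a$3 * y$3 = 0" and "b$1 * y$1 + b$2 * y$2 + b$3 * y$3 = 0"
  shows "proportional y (cross_product a b)"
proof -
  have "y$1 * cross_product a b $ 2 - y$2 * cross_product a b $ 1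
      = a$3 * (b$1 * y$1 + b$2 * y$2 + b$3 * y$3) - b$3 * (a$1 * y$1 + a$2 * y$2 + a$3 * y$3)"
    "y$1 * cross_product a b $ 3 - y$3 * cross_product a b $ 1
      = b$2 * (a$1 * y$1 + a$2 * y$2 + a$3 * y$3) - a$2 * (b$1 * y$1 + b$2 * y$2 + b$3 * y$3)"
    "y$2 * cross_product a b $ 3 - y$3 * cross_product a b $ 2
      = a$1 * (b$1 * y$1 + b$2 * y$2 + b$3 * y$3) - b$1 * (a$1 * y$1 + a$2 * y$2 + a$3 * y$3)"
    by (simp_all add: cross_product_def algebra_simps)
  then show ?thesis using assms by (simp add: proportional_3_iff)
qed

lemma kernel_proportional_cross_product_rows:
  fixes C :: "'a::comm_ring_1^3^3"
  assumes "C *v y = 0"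
  shows "proportional y (cross_product (C $ r) (C $ r'))"
proof (rule proportional_cross_product)
  have "C $ i $ 1 * y $ 1 + C $ i $ 2 * y $ 2 + C $ i $ 3 * y $ 3 = 0" for i
    using assms by (simp add: vec_eq_iff matrix_vector_mult_def sum_3)
  then show "C$r$1 * y$1 + C$r$2 * y$2 + C$r$3 * y$3 = 0"
    and "C$r'$1 * y$1 + C$r'$2 * y$2 + C$r'$3 * y$3 = 0" by blast+
qed

lemma range_proportional_if_rows_proportional:
  fixes C :: "'a::comm_ring_1^'n^'m"
  assumes "\<And>r s. proportional (C $ r) (C $ s)"
  shows "proportional (C *v w) (C *v w')"
  unfolding proportional_def
proof (intro allI)
  fix r s
  have "C $ s $ l * C $ r $ m = C $ r $ l * C $ s $ m" for l m
    using assms[of r s] by (simp add: proportional_def mult.commute)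
  then have "(\<Sum>l\<in>UNIV. \<Sum>m\<in>UNIV. C $ s $ l * w $ l * (C $ r $ m * w' $ m))
      = (\<Sum>l\<in>UNIV. \<Sum>m\<in>UNIV. C $ r $ l * w $ l * (C $ s $ m * w' $ m))"
    by (simp add: algebra_simps)
  then show "(C *v w) $ r * (C *v w') $ s = (C *v w) $ s * (C *v w') $ r"
    by (simp add: matrix_vector_mult_def sum_product)
qed

lemma common_eigenvector_if_commuting_singular:
  fixes C :: "complex^3^3" and N :: "'i \<Rightarrow> complex^3^3"
  assumes "C \<noteq> 0" and "\<not> invertible C" and comm: "\<And>i. C ** N i = N i ** C"
  shows "\<exists>k \<nu>. k \<noteq> 0 \<and> (\<forall>i. N i *v k = \<nu> i *s k)"
proof -
  have "\<exists>k s. k $ s \<noteq> 0 \<and> (\<forall>i. proportional (N i *v k) k)"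
  proof (cases "\<exists>r r'. cross_product (C $ r) (C $ r') \<noteq> 0")
    case True
    \<comment> \<open>rank 2: the kernel of \<open>C\<close> is the line spanned by a cross product of two rows\<close>
    then obtain r r' where "cross_product (C $ r) (C $ r') \<noteq> 0" by blast
    define k where "k = cross_product (C $ r) (C $ r')"
    obtain s where s: "k $ s \<noteq> 0"
      using \<open>cross_product (C $ r) (C $ r') \<noteq> 0\<close> by (auto simp: k_def vec_eq_iff)
    have "\<not> (\<exists>B. B ** C = mat 1)"
      using assms(2) invertible_left_inverse by blast
    then obtain y where "y \<noteq> 0" "C *v y = 0"
      unfolding matrix_left_invertible_ker by blast
    have "proportional y k"
      unfolding k_def using \<open>C *v y = 0\<close> by (rule kernel_proportional_cross_product_rows)
    then have y: "y = (y $ s / k $ s) *s k"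
      using s by (rule proportional_imp_eq_smult)
    with \<open>y \<noteq> 0\<close> have "y $ s / k $ s \<noteq> 0" by auto
    moreover have "(y $ s / k $ s) *s (C *v k) = 0"
      using \<open>C *v y = 0\<close> y by (metis matrix_vector_mult_smult)
    ultimately have "C *v k = 0" by simp
    have "C *v (N i *v k) = N i *v (C *v k)" for i
      by (simp only: matrix_vector_mul_assoc comm)
    then have "C *v (N i *v k) = 0" for i
      using \<open>C *v k = 0\<close> by simp
    then have "proportional (N i *v k) k" for i
      unfolding k_def by (rule kernel_proportional_cross_product_rows)
    with s show ?thesis by blast
  next
    case False
    \<comment> \<open>rank 1: the range of \<open>C\<close> is a line, spanned by any nonzero column\<close>
    then have rows: "proportional (C $ r) (C $ r')" for r r'
      by (simp add: cross_product_eq_0_iff)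
    obtain r s where "C $ r $ s \<noteq> 0"
      using assms(1) by (auto simp: vec_eq_iff)
    define k where "k = C *v axis s 1"
    have "N i *v k = C *v (N i *v axis s 1)" for i
      by (simp only: k_def matrix_vector_mul_assoc comm)
    moreover have "proportional (C *v (N i *v axis s 1)) (C *v axis s 1)" for i
      by (rule range_proportional_if_rows_proportional[OF rows])
    ultimately have "proportional (N i *v k) k" for i
      by (simp add: k_def)
    moreover have "k $ r \<noteq> 0"
      using \<open>C $ r $ s \<noteq> 0\<close> by (simp add: k_def matrix_vector_mult_axis)
    ultimately show ?thesis by blast
  qed
  then obtain k s where "k $ s \<noteq> 0" and "\<And>i. proportional (N i *v k) k" by blast
  then have "\<forall>i. N i *v k = ((N i *v k) $ s / k $ s) *s k"
    by (simp add: proportional_imp_eq_smult)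
  moreover have "k \<noteq> 0" using \<open>k $ s \<noteq> 0\<close> by auto
  ultimately show ?thesis
    by (intro exI[of _ k] exI[of _ "\<lambda>i. (N i *v k) $ s / k $ s"]) blast
qed

lemma eigenvalue_exists: "\<exists>x. det (B - mat x :: complex^3^3) = 0"
proof -
  define p where "p = [: det B, - (B$1$1 * B$2$2 - B$1$2 * B$2$1 + B$1$1 * B$3$3 - B$1$3 * B$3$1
      + B$2$2 * B$3$3 - B$2$3 * B$3$2), B$1$1 + B$2$2 + B$3$3, -1 :]"
  have "det (B - mat x) = poly p x" for x
    unfolding p_def det_3[of "B - mat x"] det_3[of B]
    by (simp add: mat_def algebra_simps power2_eq_square power3_eq_cube)
  moreover have "\<exists>x. poly p x = 0"
    by (rule fundamental_theorem_of_algebra_alt) (simp add: p_def)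
  ultimately show ?thesis by simp
qed

lemma commuting_matrix_is_scalar:
  assumes "det_rep F N" and "smooth_cubic_surface F" and comm: "\<And>i. B ** N i = N i ** B"
  shows "\<exists>x. B = mat x"
proof (rule ccontr)
  assume not_scalar: "\<nexists>x. B = mat x"
  obtain x where "det (B - mat x) = 0" using eigenvalue_exists by blast
  moreover have "B - mat x \<noteq> 0" using not_scalar by auto
  moreover have "(B - mat x) ** N i = N i ** (B - mat x)" for i
    by (simp add: matrix_mul_diff_rdistrib matrix_mul_diff_ldistrib comm mat_mult_commute)
  ultimately obtain k \<nu> where "k \<noteq> 0" "\<And>i. N i *v k = \<nu> i *s k"
    using common_eigenvector_if_commuting_singular[of "B - mat x" N]
    by (auto simp: invertible_det_nz)
  then show False
    using common_eigenvector_not_smooth assms(1,2) by blast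
qed

lemma smooth_cubic_surface_nonzero:
  assumes "smooth_cubic_surface F"
  shows "\<exists>z. F z \<noteq> 0"
proof (rule ccontr)
  assume "\<nexists>z. F z \<noteq> 0"
  then have "F = (\<lambda>_. 0)" by auto
  moreover have "(axis 1 1 :: complex^4) \<noteq> 0" by simp
  ultimately show False
    using assms unfolding smooth_cubic_surface_def by fastforce
qed

lemma intertwiner_is_scalar:
  assumes "det_rep F M" and "smooth_cubic_surface F" and AB: "\<And>i. A ** M i = M i ** B"
  shows "\<exists>x. A = mat x \<and> B = mat x"
proof -
  obtain c where "c \<noteq> 0" and c: "\<And>z. det (lin_matrix M z) = c * F z"
    using assms(1) unfolding det_rep_def by blast
  obtain z0 where "F z0 \<noteq> 0" using smooth_cubic_surface_nonzero[OF assms(2)] by blast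
  define L where "L = lin_matrix M z0"
  define L' where "L' = matrix_inv L"
  have "invertible L"
    using \<open>c \<noteq> 0\<close> \<open>F z0 \<noteq> 0\<close> by (simp add: invertible_det_nz L_def c)
  then have LL': "L ** L' = mat 1" and L'L: "L' ** L = mat 1" and "invertible L'"
    by (simp_all add: L'_def matrix_inv_right matrix_inv_left invertible_matrix_inv)
  have AL: "A ** L = L ** B"
    unfolding L_def lin_matrix_mult_left lin_matrix_mult_right by (simp add: AB)
  have L'A: "L' ** A = B ** L'"
  proof -
    have "L' ** A = L' ** (A ** L) ** L'"
      by (simp add: matrix_mul_assoc[symmetric] LL')
    also have "\<dots> = B ** L'"
      by (simp add: AL matrix_mul_assoc L'L)
    finally show ?thesis .
  qed
  have "B ** (L' ** M i) = (L' ** M i) ** B" for i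
    by (simp add: matrix_mul_assoc L'A[symmetric]) (simp add: AB flip: matrix_mul_assoc)
  moreover have "det_rep F (\<lambda>i. L' ** M i)"
    using det_rep_mult[OF assms(1) \<open>invertible L'\<close> invertible_mat_1] by simp
  ultimately obtain x where Bx: "B = mat x"
    using commuting_matrix_is_scalar[OF _ assms(2)] by blast
  have "A = L ** B ** L'"
    by (simp add: AL[symmetric] LL' flip: matrix_mul_assoc)
  also have "\<dots> = mat x ** (L ** L')"
    by (simp add: Bx matrix_mul_assoc flip: mat_mult_commute)
  also have "\<dots> = mat x"
    by (simp add: LL')
  finally show ?thesis using Bx by blast
qed

lemma rep_equiv_sym:
  assumes "rep_equiv M M'"
  shows "rep_equiv M' M"
proof -
  obtain X Y where X: "invertible X" and Y: "invertible Y" and M': "\<And>i. M' i = X ** M i ** Y"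
    using assms unfolding rep_equiv_def by blast
  have "matrix_inv X ** M' i ** matrix_inv Y = (matrix_inv X ** X) ** M i ** (Y ** matrix_inv Y)" for i
    by (simp add: M' matrix_mul_assoc)
  then have "M i = matrix_inv X ** M' i ** matrix_inv Y" for i
    by (simp add: matrix_inv_left[OF X] matrix_inv_right[OF Y])
  then show ?thesis
    unfolding rep_equiv_def using X Y invertible_matrix_inv by blast
qed

lemma herm_equiv_imp_rep_equiv: "herm_equiv V W \<Longrightarrow> rep_equiv V W"
  unfolding herm_equiv_def rep_equiv_def using invertible_adjoint3 by blast

lemma herm_equiv_uminus_imp_rep_equiv:
  assumes "herm_equiv (\<lambda>i. - V i) W"
  shows "rep_equiv V W"
proof -
  obtain X where "invertible X" and W: "\<And>i. W i = X ** (- V i) ** adjoint3 X"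
    using assms unfolding herm_equiv_def by blast
  then have "W i = (- X) ** V i ** adjoint3 X" for i
    by (simp add: matrix_mul_uminus_left matrix_mul_uminus_right)
  then show ?thesis
    unfolding rep_equiv_def using \<open>invertible X\<close> invertible_uminus invertible_adjoint3 by blast
qed

lemma real_scaled_congruence_imp_herm_equiv:
  assumes "\<rho> \<noteq> 0" and "invertible Y" and W: "\<And>i. W i = \<rho> *\<^sub>R (adjoint3 Y ** V i ** Y)"
  shows "herm_equiv V W \<or> herm_equiv (\<lambda>i. - V i) W"
proof -
  define P where "P = sqrt \<bar>\<rho>\<bar> *\<^sub>R adjoint3 Y"
  have "invertible P"
    unfolding P_def using assms(1,2) by (simp add: scalar_invertible invertible_adjoint3)
  have congr: "P ** A ** adjoint3 P = \<bar>\<rho>\<bar> *\<^sub>R (adjoint3 Y ** A ** Y)" for A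
    by (simp add: P_def matrix_mul_scaleR_left matrix_mul_scaleR_right)
  show ?thesis
  proof (cases "\<rho> > 0")
    case True
    then have "W i = P ** V i ** adjoint3 P" for i
      by (simp add: congr W)
    then show ?thesis
      unfolding herm_equiv_def using \<open>invertible P\<close> by blast
  next
    case False
    then have "W i = P ** (- V i) ** adjoint3 P" for i
      using assms(1) by (simp add: congr W matrix_mul_uminus_left matrix_mul_uminus_right)
    then show ?thesis
      unfolding herm_equiv_def using \<open>invertible P\<close> by blast
  qed
qed

lemma hermitian_rep_equiv_imp_real_scaled_congruence:
  assumes "det_rep F V" and "smooth_cubic_surface F"
    and "\<And>i. hermitian3 (V i)" and "\<And>i. hermitian3 (W i)" and "rep_equiv V W"
  shows "\<exists>\<rho> Y. \<rho> \<noteq> 0 \<and> invertible Y \<and> (\<forall>i. W i = \<rho> *\<^sub>R (adjoint3 Y ** V i ** Y))"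
proof -
  obtain X Y where X: "invertible X" and Y: "invertible Y" and W: "\<And>i. W i = X ** V i ** Y"
    using assms(5) unfolding rep_equiv_def by blast
  define Ya where "Ya = adjoint3 Y"
  have Ya: "invertible Ya" using Y by (simp add: Ya_def invertible_adjoint3)
  have swap: "X ** V i ** Y = Ya ** V i ** adjoint3 X" for i
    using assms(3,4)[of i] unfolding hermitian3_def
    by (metis W Ya_def adjoint3_mult matrix_mul_assoc)
  have "(matrix_inv Ya ** X) ** V i = V i ** (adjoint3 X ** matrix_inv Y)" for i
  proof -
    have "(matrix_inv Ya ** X) ** V i = matrix_inv Ya ** (X ** V i ** Y) ** matrix_inv Y"
      by (simp add: matrix_mul_assoc[symmetric] matrix_inv_right[OF Y])
    also have "\<dots> = V i ** (adjoint3 X ** matrix_inv Y)"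
      by (simp add: swap matrix_mul_assoc matrix_inv_left[OF Ya])
    finally show ?thesis .
  qed
  then obtain x where x_left: "matrix_inv Ya ** X = mat x" and x_right: "adjoint3 X ** matrix_inv Y = mat x"
    using intertwiner_is_scalar[OF assms(1,2)] by blast
  have X_eq: "X = Ya ** mat x"
    using x_left by (metis matrix_inv_right[OF Ya] matrix_mul_assoc matrix_mul_lid)
  have "mat x ** Y = adjoint3 X"
    using x_right by (metis matrix_inv_left[OF Y] matrix_mul_assoc matrix_mul_rid)
  also have "\<dots> = mat (cnj x) ** Y"
    by (simp add: X_eq Ya_def adjoint3_mult)
  finally have "mat x = (mat (cnj x) :: complex^3^3)"
    by (metis matrix_inv_right[OF Y] matrix_mul_assoc matrix_mul_rid)
  then have x: "x = complex_of_real (Re x)"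
    by (simp add: mat_inject complex_eq_iff)
  have "Re x \<noteq> 0"
  proof
    assume "Re x = 0"
    then have "X = 0" using X_eq x by simp
    then show False using X not_invertible_0 by blast
  qed
  moreover have "W i = Re x *\<^sub>R (adjoint3 Y ** V i ** Y)" for i
  proof -
    have "W i = mat x ** (Ya ** V i ** Y)"
      by (simp add: W X_eq matrix_mul_assoc mat_mult_commute)
    then show ?thesis
      by (subst (asm) x) (simp add: mat_of_real_mult Ya_def)
  qed
  ultimately show ?thesis using Y by blast
qed

theorem mainTheorem11:
  fixes a :: "4 \<Rightarrow> 4 \<Rightarrow> 4 \<Rightarrow> real" and U1 U2 :: "4 \<Rightarrow> complex^3^3"
  assumes "smooth_cubic_surface (cubic_form a)"
    and "self_adjoint_det_rep (cubic_form a) U1"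
    and "self_adjoint_det_rep (cubic_form a) U2"
  shows "rep_equiv U1 U2 \<longleftrightarrow> (herm_equiv U2 U1 \<or> herm_equiv (\<lambda>i. - U2 i) U1)"
proof
  assume "rep_equiv U1 U2"
  then have "rep_equiv U2 U1" by (rule rep_equiv_sym)
  then obtain \<rho> Y where "\<rho> \<noteq> 0" "invertible Y" "\<And>i. U1 i = \<rho> *\<^sub>R (adjoint3 Y ** U2 i ** Y)"
    using hermitian_rep_equiv_imp_real_scaled_congruence[OF _ assms(1)] assms(2,3)
    unfolding self_adjoint_det_rep_def by blast
  then show "herm_equiv U2 U1 \<or> herm_equiv (\<lambda>i. - U2 i) U1"
    by (rule real_scaled_congruence_imp_herm_equiv)
next
  assume "herm_equiv U2 U1 \<or> herm_equiv (\<lambda>i. - U2 i) U1"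
  then have "rep_equiv U2 U1"
    using herm_equiv_imp_rep_equiv herm_equiv_uminus_imp_rep_equiv by blast
  then show "rep_equiv U1 U2" by (rule rep_equiv_sym)
qed

end
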